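(* Let $d\ge 1$ and $h\ge 1$ be integers, let $T$ be the complete $d$-ary tree of height $h$, and let $v$ be a leaf of $T$. For every integer $0\le l\le h$, the hitting time from the ancestor of $v$ at distance $l$ from $v$ to $v$ is $g_{h,h}(d)-g_{h,h-l}(d)$.
   Context: The complete $d$-ary tree of height $h$ is the rooted tree in which every vertex at depth less than $h$ has exactly $d$ children and every vertex at depth $h$ is a leaf; the ancestors of $v$ are the vertices on the path from $v$ to the root (including $v$). For a positive integer $k$ and nonnegative integer $m$ define $g_{k,0}(d)=0$ and, for $m\ge 1$, $g_{k,m}(d)=\left(\sum_{i=0}^{m-1}(2m-2i)d^{k-i}\right)-m$. A simple random walk moves at each step to a uniformly random neighbor; the hitting time from $x$ to $y$ is the expected number of steps for a simple random walk started at $x$ to first reach $y$. *)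

theory Defs
  imports Complex_Main
begin

text \<open>Complete d-ary tree of height h: vertices are words over {0..<d} of length at most h;
  the root is the empty word, the children of u are u @ [i], leaves are words of length h.\<close>
definition tree_verts :: "nat \<Rightarrow> nat \<Rightarrow> nat list set" where
  "tree_verts d h = {u. set u \<subseteq> {..<d} \<and> length u \<le> h}"

definition tree_nbrs :: "nat \<Rightarrow> nat \<Rightarrow> nat list \<Rightarrow> nat list set" where
  "tree_nbrs d h u = {w \<in> tree_verts d h. (u \<noteq> [] \<and> w = butlast u) \<or> (\<exists>i<d. w = u @ [i])}"

definition srw_trans :: "nat \<Rightarrow> nat \<Rightarrow> nat list \<Rightarrow> nat list \<Rightarrow> real" where
  "srw_trans d h u w = (if w \<in> tree_nbrs d h u then 1 / real (card (tree_nbrs d h u)) else 0)"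

definition walk_prob :: "nat \<Rightarrow> nat \<Rightarrow> nat list list \<Rightarrow> real" where
  "walk_prob d h ws = (\<Prod>i<length ws - 1. srw_trans d h (ws ! i) (ws ! Suc i))"

definition first_hit_prob :: "nat \<Rightarrow> nat \<Rightarrow> nat list \<Rightarrow> nat list \<Rightarrow> nat \<Rightarrow> real" where
  "first_hit_prob d h x y n =
     (\<Sum>ws \<in> {ws. length ws = Suc n \<and> set ws \<subseteq> tree_verts d h \<and> hd ws = x \<and> last ws = y
                 \<and> y \<notin> set (take n ws)}. walk_prob d h ws)"

definition hitting_time :: "nat \<Rightarrow> nat \<Rightarrow> nat list \<Rightarrow> nat list \<Rightarrow> real" where
  "hitting_time d h x y = (\<Sum>n. real n * first_hit_prob d h x y n)"

definition g_fun :: "nat \<Rightarrow> nat \<Rightarrow> real \<Rightarrow> real" where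
  "g_fun k m d = (if m = 0 then 0 else
     (\<Sum>i<m. real (2*m - 2*i) * d powi (int k - int i)) - real m)"

end

theory Submission
  imports Defs "HOL-Library.Sublist"
begin

text \<open>
  For a finite Markov chain, the first-passage series \<open>\<Sum>n. n * P(first hit at n)\<close> converges
  to any nonnegative solution \<open>H\<close> of \<open>H v = 0\<close>, \<open>H x = 1 + \<Sum>w. P x w * H w\<close> (\<open>x \<noteq> v\<close>):
  unrolling the equation \<open>N\<close> times writes \<open>H x\<close> as the sum of the first \<open>N\<close> survival
  probabilities plus a remainder bounded by a multiple of the \<open>N\<close>-th survival probability.

  On the tree such a solution is written down explicitly. A vertex \<open>u\<close> whose longest common
  prefix with the leaf \<open>v\<close> has length \<open>a\<close> first climbs to depth \<open>a\<close>, one level at a time, and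
  then descends the spine of ancestors of \<open>v\<close>, one level at a time; both single-level times are
  geometric sums in \<open>d\<close>. Checking the equation reduces to two linear recurrences for these sums,
  and summing the spine steps from depth \<open>h - l\<close> to \<open>h\<close> gives \<open>g\<^sub>h\<^sub>,\<^sub>h(d) - g\<^sub>h\<^sub>,\<^sub>h\<^sub>-\<^sub>l(d)\<close>.
\<close>

lemma antimono_summable_times_tendsto_zero:
  fixes a :: "nat \<Rightarrow> real"
  assumes nonneg: "\<And>n. 0 \<le> a n" and antimono: "\<And>n. a (Suc n) \<le> a n" and "summable a"
  shows "(\<lambda>n. real n * a n) \<longlonglongrightarrow> 0"
proof (rule LIMSEQ_I)
  fix e :: real assume "0 < e"
  have "Cauchy (\<lambda>n. \<Sum>k<n. a k)"
    using \<open>summable a\<close> by (simp add: summable_iff_convergent Cauchy_convergent_iff)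
  then obtain M where M: "\<And>m n. M \<le> m \<Longrightarrow> M \<le> n \<Longrightarrow> norm ((\<Sum>k<m. a k) - (\<Sum>k<n. a k)) < e / 2"
    using \<open>0 < e\<close> by (meson CauchyD half_gt_zero)
  have "norm (real N * a N - 0) < e" if "2 * M \<le> N" for N
  proof -
    define m where "m = N div 2"
    have m: "m \<le> N" "M \<le> m" "real N \<le> 2 * real (N - m)"
      using that by (auto simp: m_def)
    have "real (N - m) * a N = (\<Sum>k\<in>{m..<N}. a N)" by simp
    also have "\<dots> \<le> (\<Sum>k\<in>{m..<N}. a k)"
      by (intro sum_mono) (use lift_Suc_antimono_le[of a, OF antimono] in auto)
    also have "\<dots> = (\<Sum>k<N. a k) - (\<Sum>k<m. a k)"
      using m by (simp add: lessThan_atLeast0 sum_diff_nat_ivl)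
    also have "\<dots> < e / 2"
      using M[of N m] m that abs_ge_self[of "(\<Sum>k<N. a k) - (\<Sum>k<m. a k)"] by simp
    finally have "real (N - m) * a N < e / 2" .
    moreover have "real N * a N \<le> 2 * real (N - m) * a N"
      using m nonneg[of N] by (intro mult_right_mono) auto
    ultimately show ?thesis using nonneg[of N] by simp
  qed
  then show "\<exists>N0. \<forall>N\<ge>N0. norm (real N * a N - 0) < e" by blast
qed

locale first_passage =
  fixes V :: "'a set" and P :: "'a \<Rightarrow> 'a \<Rightarrow> real" and v :: 'a
    and hit :: "nat \<Rightarrow> 'a \<Rightarrow> real" and H :: "'a \<Rightarrow> real"
  assumes finite_V: "finite V" and target_in_V: "v \<in> V"
    and P_nonneg: "\<And>x w. 0 \<le> P x w"
    and P_stochastic: "\<And>x. x \<in> V \<Longrightarrow> (\<Sum>w\<in>V. P x w) = 1"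
    and hit_0: "\<And>x. x \<in> V \<Longrightarrow> hit 0 x = (if x = v then 1 else 0)"
    and hit_Suc: "\<And>x n. x \<in> V \<Longrightarrow>
      hit (Suc n) x = (if x = v then 0 else (\<Sum>w\<in>V. P x w * hit n w))"
    and H_target: "H v = 0"
    and H_nonneg: "\<And>x. x \<in> V \<Longrightarrow> 0 \<le> H x"
    and H_harmonic: "\<And>x. x \<in> V \<Longrightarrow> x \<noteq> v \<Longrightarrow> H x = 1 + (\<Sum>w\<in>V. P x w * H w)"
begin

text \<open>\<open>survival n x\<close> is the probability of not having hit \<open>v\<close> within the first \<open>n\<close> steps, and
  \<open>residual N x\<close> the expectation of \<open>H\<close> at time \<open>N\<close> on that event.\<close>

fun survival :: "nat \<Rightarrow> 'a \<Rightarrow> real" where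
  "survival 0 x = (if x = v then 0 else 1)"
| "survival (Suc n) x = (if x = v then 0 else (\<Sum>w\<in>V. P x w * survival n w))"

fun residual :: "nat \<Rightarrow> 'a \<Rightarrow> real" where
  "residual 0 x = H x"
| "residual (Suc n) x = (if x = v then 0 else (\<Sum>w\<in>V. P x w * residual n w))"

lemma survival_target [simp]: "survival n v = 0"
  by (cases n) auto

lemma hit_nonneg: "x \<in> V \<Longrightarrow> 0 \<le> hit n x"
  by (induction n arbitrary: x) (auto simp: hit_0 hit_Suc intro!: sum_nonneg mult_nonneg_nonneg P_nonneg)

lemma survival_nonneg: "x \<in> V \<Longrightarrow> 0 \<le> survival n x"
  by (induction n arbitrary: x) (auto intro!: sum_nonneg mult_nonneg_nonneg P_nonneg)

lemma hit_Suc_eq_survival_diff: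
  assumes "x \<in> V" "x \<noteq> v"
  shows "hit (Suc n) x = survival n x - survival (Suc n) x"
  using assms
proof (induction n arbitrary: x)
  case 0
  have "(\<Sum>w\<in>V. P x w * (if w = v then 1 else 0)) + (\<Sum>w\<in>V. P x w * (if w = v then 0 else 1))
      = (\<Sum>w\<in>V. P x w)"
    by (subst sum.distrib[symmetric]) (rule sum.cong, auto)
  then show ?case
    using 0 P_stochastic[of x] by (simp add: hit_Suc hit_0 cong: sum.cong)
next
  case (Suc n)
  have "hit (Suc (Suc n)) x = (\<Sum>w\<in>V. P x w * (survival n w - survival (Suc n) w))"
    using Suc by (auto simp: hit_Suc intro!: sum.cong simp del: survival.simps)
  also have "\<dots> = survival (Suc n) x - survival (Suc (Suc n)) x"
    using Suc.prems by (simp add: right_diff_distrib sum_subtractf)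
  finally show ?case .
qed

lemma survival_Suc_le: "x \<in> V \<Longrightarrow> survival (Suc n) x \<le> survival n x"
  using hit_Suc_eq_survival_diff[of x n] hit_nonneg[of x "Suc n"]
  by (cases "x = v") (auto simp del: survival.simps)

lemma H_eq_survival_sum_residual: "x \<in> V \<Longrightarrow> H x = (\<Sum>k<N. survival k x) + residual N x"
proof (induction N arbitrary: x)
  case 0
  then show ?case by simp
next
  case (Suc N)
  show ?case
  proof (cases "x = v")
    case True
    then show ?thesis by (simp add: H_target del: survival.simps)
  next
    case False
    have "H x = 1 + (\<Sum>w\<in>V. P x w * ((\<Sum>k<N. survival k w) + residual N w))"
      using H_harmonic[OF Suc.prems False] Suc.IH by (simp cong: sum.cong)
    also have "\<dots> = 1 + (\<Sum>k<N. \<Sum>w\<in>V. P x w * survival k w) + (\<Sum>w\<in>V. P x w * residual N w)"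
      by (simp add: distrib_left sum.distrib sum_distrib_left sum.swap[of _ V])
    also have "\<dots> = (\<Sum>k<Suc N. survival k x) + residual (Suc N) x"
      using False by (simp add: sum.lessThan_Suc_shift del: sum.lessThan_Suc)
    finally show ?thesis .
  qed
qed

lemma residual_nonneg: "x \<in> V \<Longrightarrow> 0 \<le> residual N x"
  by (induction N arbitrary: x) (auto intro!: sum_nonneg mult_nonneg_nonneg P_nonneg H_nonneg)

lemma residual_le: "x \<in> V \<Longrightarrow> residual N x \<le> (\<Sum>w\<in>V. H w) * survival N x"
proof (induction N arbitrary: x)
  case 0
  then show ?case
    using member_le_sum[of x V H] H_nonneg finite_V by (auto simp: H_target)
next
  case (Suc N)
  show ?case
  proof (cases "x = v")
    case False
    have "residual (Suc N) x \<le> (\<Sum>w\<in>V. P x w * ((\<Sum>w\<in>V. H w) * survival N w))"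
      using False by (simp, intro sum_mono mult_left_mono Suc.IH P_nonneg)
    then show ?thesis
      using False by (simp add: sum_distrib_left mult.left_commute)
  qed simp
qed

lemma survival_sums: assumes x: "x \<in> V" shows "(\<lambda>k. survival k x) sums H x"
proof -
  have "(\<Sum>k<N. survival k x) \<le> H x" for N
    using H_eq_survival_sum_residual[OF x, of N] residual_nonneg[OF x, of N] by linarith
  then have "summable (\<lambda>k. survival k x)"
    using survival_nonneg[OF x] by (intro summableI_nonneg_bounded)
  then have bound_to_zero: "(\<lambda>N. (\<Sum>w\<in>V. H w) * survival N x) \<longlonglongrightarrow> 0"
    using tendsto_mult_right_zero summable_LIMSEQ_zero by blast
  have "(\<lambda>N. residual N x) \<longlonglongrightarrow> 0"
    using residual_nonneg[OF x] residual_le[OF x]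
    by (intro real_tendsto_sandwich[OF _ _ tendsto_const bound_to_zero]) auto
  then have "(\<lambda>N. H x - residual N x) \<longlonglongrightarrow> H x"
    using tendsto_diff[OF tendsto_const] by fastforce
  moreover have "(\<lambda>N. H x - residual N x) = (\<lambda>N. \<Sum>k<N. survival k x)"
    using H_eq_survival_sum_residual[OF x] by (simp add: fun_eq_iff algebra_simps)
  ultimately show ?thesis
    unfolding sums_def by simp
qed

theorem first_passage_sums: assumes x: "x \<in> V" shows "(\<lambda>n. real n * hit n x) sums H x"
proof (cases "x = v")
  case True
  have "(\<lambda>n. real n * hit n v) = (\<lambda>_. 0)"
  proof
    show "real n * hit n v = 0" for n
      by (cases n) (simp_all add: hit_Suc[OF target_in_V])
  qed
  then show ?thesis unfolding True H_target by simp
next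
  case False
  \<comment> \<open>summation by parts\<close>
  have partial: "(\<Sum>n<Suc N. real n * hit n x) = (\<Sum>k<N. survival k x) - real N * survival N x" for N
  proof (induction N)
    case (Suc N)
    have "(\<Sum>n<Suc (Suc N). real n * hit n x) = (\<Sum>k<N. survival k x) - real N * survival N x
        + real (Suc N) * (survival N x - survival (Suc N) x)"
      using Suc.IH hit_Suc_eq_survival_diff[OF x False, of N] by (simp del: survival.simps)
    then show ?case by (simp add: algebra_simps del: survival.simps)
  qed simp
  have "(\<lambda>N. real N * survival N x) \<longlonglongrightarrow> 0"
    by (intro antimono_summable_times_tendsto_zero survival_nonneg[OF x] survival_Suc_le[OF x]
        sums_summable[OF survival_sums[OF x]])
  then have "(\<lambda>N. (\<Sum>k<N. survival k x) - real N * survival N x) \<longlonglongrightarrow> H x - 0"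
    using survival_sums[OF x] unfolding sums_def by (intro tendsto_diff)
  then have "(\<lambda>N. \<Sum>n<Suc N. real n * hit n x) \<longlonglongrightarrow> H x"
    unfolding partial by simp
  then show ?thesis
    unfolding sums_def by (rule filterlim_sequentially_Suc[THEN iffD1])
qed

end

lemma finite_tree_verts: "finite (tree_verts d h)"
  unfolding tree_verts_def using finite_lists_length_le[of "{..<d}" h] by simp

definition first_hit_paths :: "nat \<Rightarrow> nat \<Rightarrow> nat list \<Rightarrow> nat list \<Rightarrow> nat \<Rightarrow> nat list list set" where
  "first_hit_paths d h x y n = {ws. length ws = Suc n \<and> set ws \<subseteq> tree_verts d h \<and> hd ws = x
     \<and> last ws = y \<and> y \<notin> set (take n ws)}"

lemma first_hit_prob_eq_sum_paths:
  "first_hit_prob d h x y n = (\<Sum>ws\<in>first_hit_paths d h x y n. walk_prob d h ws)"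
  by (simp add: first_hit_prob_def first_hit_paths_def)

lemma finite_first_hit_paths: "finite (first_hit_paths d h x y n)"
proof (rule finite_subset)
  show "first_hit_paths d h x y n \<subseteq> {ws. set ws \<subseteq> tree_verts d h \<and> length ws = Suc n}"
    by (auto simp: first_hit_paths_def)
  show "finite \<dots>" by (rule finite_lists_length_eq[OF finite_tree_verts])
qed

lemma first_hit_prob_0:
  "x \<in> tree_verts d h \<Longrightarrow> first_hit_prob d h x y 0 = (if x = y then 1 else 0)"
proof -
  assume "x \<in> tree_verts d h"
  then have "first_hit_paths d h x y 0 = (if x = y then {[x]} else {})"
    by (auto simp: first_hit_paths_def length_Suc_conv)
  then show ?thesis by (simp add: first_hit_prob_eq_sum_paths walk_prob_def)
qed

lemma walk_prob_Cons:
  "ws \<noteq> [] \<Longrightarrow> walk_prob d h (x # ws) = srw_trans d h x (hd ws) * walk_prob d h ws"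
  by (cases ws) (simp_all add: walk_prob_def prod.lessThan_Suc_shift del: prod.lessThan_Suc)

lemma first_hit_paths_Suc:
  assumes "x \<in> tree_verts d h" "x \<noteq> y"
  shows "first_hit_paths d h x y (Suc n) = (Cons x) ` (\<Union>w\<in>tree_verts d h. first_hit_paths d h w y n)"
proof (intro equalityI subsetI)
  fix ws assume ws: "ws \<in> first_hit_paths d h x y (Suc n)"
  then obtain ws' where "ws = x # ws'" "ws' \<noteq> []"
    by (auto simp: first_hit_paths_def length_Suc_conv)
  with ws show "ws \<in> (Cons x) ` (\<Union>w\<in>tree_verts d h. first_hit_paths d h w y n)"
    by (auto simp: first_hit_paths_def intro!: imageI UN_I[of "hd ws'"])
qed (use assms in \<open>auto simp: first_hit_paths_def\<close>)

lemma first_hit_prob_Suc: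
  assumes x: "x \<in> tree_verts d h"
  shows "first_hit_prob d h x y (Suc n) =
    (if x = y then 0 else (\<Sum>w\<in>tree_verts d h. srw_trans d h x w * first_hit_prob d h w y n))"
proof (cases "x = y")
  case True
  then have "first_hit_paths d h x y (Suc n) = {}"
    by (auto simp: first_hit_paths_def length_Suc_conv)
  then show ?thesis using True by (simp add: first_hit_prob_eq_sum_paths)
next
  case False
  let ?V = "tree_verts d h"
  have "first_hit_prob d h x y (Suc n)
      = (\<Sum>ws\<in>(\<Union>w\<in>?V. first_hit_paths d h w y n). walk_prob d h (x # ws))"
    by (simp add: first_hit_prob_eq_sum_paths first_hit_paths_Suc[OF x False] sum.reindex)
  also have "\<dots> = (\<Sum>w\<in>?V. \<Sum>ws\<in>first_hit_paths d h w y n. walk_prob d h (x # ws))"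
    by (rule sum.UNION_disjoint)
       (auto simp: finite_tree_verts finite_first_hit_paths, auto simp: first_hit_paths_def)
  also have "\<dots> = (\<Sum>w\<in>?V. srw_trans d h x w * first_hit_prob d h w y n)"
    unfolding first_hit_prob_eq_sum_paths sum_distrib_left
    by (intro sum.cong refl) (auto simp: first_hit_paths_def intro!: walk_prob_Cons)
  finally show ?thesis using False by simp
qed

lemma srw_trans_nonneg: "0 \<le> srw_trans d h u w"
  by (simp add: srw_trans_def)

lemma first_hit_prob_nonneg: "0 \<le> first_hit_prob d h x y n"
  unfolding first_hit_prob_eq_sum_paths walk_prob_def
  by (intro sum_nonneg prod_nonneg srw_trans_nonneg)

lemma tree_nbrs_eq:
  "u \<in> tree_verts d h \<Longrightarrow> tree_nbrs d h u =
    (if u = [] then {} else {butlast u}) \<union> (if length u < h then (\<lambda>i. u @ [i]) ` {..<d} else {})"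
  by (auto simp: tree_nbrs_def tree_verts_def dest: in_set_butlastD)

lemma sum_srw_trans_mult:
  "u \<in> tree_verts d h \<Longrightarrow> (\<Sum>w\<in>tree_verts d h. srw_trans d h u w * f w)
    = (\<Sum>w\<in>tree_nbrs d h u. f w) / card (tree_nbrs d h u)"
proof -
  assume "u \<in> tree_verts d h"
  let ?N = "tree_nbrs d h u"
  have "(\<Sum>w\<in>tree_verts d h. srw_trans d h u w * f w)
      = (\<Sum>w\<in>tree_verts d h. if w \<in> ?N then f w / card ?N else 0)"
    by (rule sum.cong) (auto simp: srw_trans_def)
  also have "\<dots> = (\<Sum>w\<in>tree_verts d h \<inter> ?N. f w / card ?N)"
    by (rule sum.inter_restrict[OF finite_tree_verts, symmetric])
  also have "tree_verts d h \<inter> ?N = ?N" by (auto simp: tree_nbrs_def)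
  finally show ?thesis by (simp add: sum_divide_distrib)
qed

lemma tree_nbrs_nonempty: "1 \<le> d \<Longrightarrow> 1 \<le> h \<Longrightarrow> u \<in> tree_verts d h \<Longrightarrow> tree_nbrs d h u \<noteq> {}"
  by (auto simp: tree_nbrs_eq tree_verts_def lessThan_empty_iff)

lemma finite_tree_nbrs: "finite (tree_nbrs d h u)"
  by (rule finite_subset[OF _ finite_tree_verts]) (auto simp: tree_nbrs_def)

lemma sum_srw_trans:
  "1 \<le> d \<Longrightarrow> 1 \<le> h \<Longrightarrow> u \<in> tree_verts d h \<Longrightarrow> (\<Sum>w\<in>tree_verts d h. srw_trans d h u w) = 1"
  using sum_srw_trans_mult[of u d h "\<lambda>_. 1"] tree_nbrs_nonempty[of d h u] finite_tree_nbrs[of d h u]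
  by simp

lemma longest_common_prefix_eq_self: "prefix u v \<Longrightarrow> longest_common_prefix u v = u"
  by (induction u v rule: longest_common_prefix.induct) auto

lemma longest_common_prefix_snoc:
  "longest_common_prefix (u @ [i]) v = (if prefix (u @ [i]) v then u @ [i] else longest_common_prefix u v)"
proof (induction u arbitrary: v)
  case Nil
  show ?case by (cases v) auto
next
  case (Cons a u)
  then show ?case by (cases v) auto
qed

lemma longest_common_prefix_butlast:
  "u \<noteq> [] \<Longrightarrow> \<not> prefix u v \<Longrightarrow> longest_common_prefix (butlast u) v = longest_common_prefix u v"
  using longest_common_prefix_snoc[of "butlast u" "last u" v] by simp

lemma prefix_snoc_iff_nth:
  "prefix (u @ [i]) v \<longleftrightarrow> prefix u v \<and> length u < length v \<and> v ! length u = i"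
  by (auto simp: prefix_def nth_append neq_Nil_conv)

text \<open>The expected hitting times are built from two single-level times (with \<open>r = d\<close>):
  \<open>climb_time r h i\<close>, for a vertex at depth \<open>i \<ge> 1\<close> to reach its parent, and \<open>spine_step r h i\<close>,
  for the ancestor of \<open>v\<close> at depth \<open>i\<close> to reach the one at depth \<open>i + 1\<close>.\<close>

definition climb_time :: "real \<Rightarrow> nat \<Rightarrow> nat \<Rightarrow> real" where
  "climb_time r h i = 1 + 2 * (\<Sum>s<h - i. r ^ Suc s)"

definition ascent_time :: "real \<Rightarrow> nat \<Rightarrow> nat \<Rightarrow> real" where
  "ascent_time r h j = (\<Sum>i<j. climb_time r h (Suc i))"

definition spine_step :: "real \<Rightarrow> nat \<Rightarrow> nat \<Rightarrow> real" where
  "spine_step r h i = 2 * (\<Sum>k\<le>i. r ^ (h - k)) - 1"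

definition spine_time :: "real \<Rightarrow> nat \<Rightarrow> nat \<Rightarrow> real" where
  "spine_time r h j = (\<Sum>i\<in>{j..<h}. spine_step r h i)"

definition tree_hitting_time :: "real \<Rightarrow> nat \<Rightarrow> nat list \<Rightarrow> nat list \<Rightarrow> real" where
  "tree_hitting_time r h v u = spine_time r h (length (longest_common_prefix u v))
     + ascent_time r h (length u) - ascent_time r h (length (longest_common_prefix u v))"

lemma climb_time_last: "climb_time r h h = 1"
  by (simp add: climb_time_def)

lemma climb_time_rec: "j < h \<Longrightarrow> climb_time r h j = r + 1 + r * climb_time r h (Suc j)"
proof -
  assume "j < h"
  then have "h - j = Suc (h - Suc j)" by simp
  then show ?thesis
    by (simp add: climb_time_def sum.lessThan_Suc_shift sum_distrib_left algebra_simps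
        del: sum.lessThan_Suc)
qed

lemma climb_time_geometric:
  assumes "j < h" shows "(r - 1) * climb_time r h (Suc j) = 2 * r ^ (h - j) - r - 1"
proof -
  have geometric: "(r - 1) * (\<Sum>s<n. r ^ Suc s) = r ^ Suc n - r" for n
    by (induction n) (simp_all add: algebra_simps)
  have "Suc (h - Suc j) = h - j" using assms by simp
  then show ?thesis
    using geometric[of "h - Suc j"] by (simp add: climb_time_def algebra_simps)
qed

lemma spine_step_0: "0 < h \<Longrightarrow> spine_step r h 0 = r + (r - 1) * climb_time r h 1"
  using climb_time_geometric[of 0 h r] by (simp add: spine_step_def)

lemma spine_step_Suc:
  "Suc k < h \<Longrightarrow> spine_step r h (Suc k) = spine_step r h k + r + 1 + (r - 1) * climb_time r h (Suc (Suc k))"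
  using climb_time_geometric[of "Suc k" h r] by (simp add: spine_step_def)

lemma spine_time_rec: "j < h \<Longrightarrow> spine_time r h j = spine_step r h j + spine_time r h (Suc j)"
  by (simp add: spine_time_def sum.atLeast_Suc_lessThan)

lemma spine_time_last: "spine_time r h h = 0"
  by (simp add: spine_time_def)

lemma ascent_time_Suc: "ascent_time r h (Suc j) = ascent_time r h j + climb_time r h (Suc j)"
  by (simp add: ascent_time_def)

lemma spine_time_nonneg: "1 \<le> r \<Longrightarrow> 0 \<le> spine_time r h j"
proof -
  assume "1 \<le> r"
  have sum_ge_1: "1 \<le> (\<Sum>k\<le>i. r ^ (h - k))" for i
  proof -
    have "1 \<le> r ^ (h - 0)" using \<open>1 \<le> r\<close> by simp
    also have "\<dots> \<le> (\<Sum>k\<le>i. r ^ (h - k))"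
      by (rule member_le_sum) (use \<open>1 \<le> r\<close> in auto)
    finally show ?thesis .
  qed
  show ?thesis
    unfolding spine_time_def spine_step_def
  proof (intro sum_nonneg)
    show "0 \<le> 2 * (\<Sum>k\<le>i. r ^ (h - k)) - 1" for i using sum_ge_1[of i] by linarith
  qed
qed

lemma ascent_time_mono: "0 \<le> r \<Longrightarrow> a \<le> j \<Longrightarrow> ascent_time r h a \<le> ascent_time r h j"
  unfolding ascent_time_def climb_time_def
  by (intro sum_mono2) (auto intro!: add_nonneg_nonneg sum_nonneg)

lemma tree_hitting_time_nonneg:
  assumes "1 \<le> r" shows "0 \<le> tree_hitting_time r h v u"
proof -
  let ?a = "length (longest_common_prefix u v)"
  have "?a \<le> length u" by (rule prefix_length_le[OF longest_common_prefix_prefix1])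
  then have "ascent_time r h ?a \<le> ascent_time r h (length u)"
    using assms by (intro ascent_time_mono) auto
  then show ?thesis
    using spine_time_nonneg[OF assms, of h ?a] by (simp add: tree_hitting_time_def)
qed

lemma tree_hitting_time_prefix: "prefix u v \<Longrightarrow> tree_hitting_time r h v u = spine_time r h (length u)"
  by (simp add: tree_hitting_time_def longest_common_prefix_eq_self)

lemma tree_hitting_time_snoc_prefix:
  assumes "prefix u v" and "\<not> prefix (u @ [i]) v"
  shows "tree_hitting_time r h v (u @ [i]) = spine_time r h (length u) + climb_time r h (Suc (length u))"
  using assms by (simp add: tree_hitting_time_def longest_common_prefix_snoc
      longest_common_prefix_eq_self ascent_time_Suc)

lemma g_fun_eq_sum_spine_step: "m \<le> h \<Longrightarrow> g_fun h m r = (\<Sum>i<m. spine_step r h i)"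
proof -
  have powers: "g_fun h m r = (\<Sum>i<m. real (2 * m - 2 * i) * r ^ (h - i)) - real m" if "m \<le> h" for m
  proof -
    have "r powi (int h - int i) = r ^ (h - i)" if "i < m" for i
      using that \<open>m \<le> h\<close> by (simp add: power_int_def nat_diff_distrib)
    then show ?thesis by (simp add: g_fun_def)
  qed
  show "m \<le> h \<Longrightarrow> g_fun h m r = (\<Sum>i<m. spine_step r h i)"
  proof (induction m)
    case (Suc m)
    have "(\<Sum>i<Suc m. real (2 * Suc m - 2 * i) * r ^ (h - i))
        = (\<Sum>i<Suc m. real (2 * m - 2 * i) * r ^ (h - i) + 2 * r ^ (h - i))"
      by (rule sum.cong) (auto simp: of_nat_diff algebra_simps)
    also have "\<dots> = (\<Sum>i<m. real (2 * m - 2 * i) * r ^ (h - i)) + 2 * (\<Sum>i\<le>m. r ^ (h - i))"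
      by (simp add: sum.distrib sum_distrib_left lessThan_Suc_atMost[symmetric])
    finally have "g_fun h (Suc m) r = g_fun h m r + spine_step r h m"
      using Suc.prems by (simp add: powers spine_step_def)
    then show ?case using Suc by simp
  qed (simp add: g_fun_def)
qed

lemma spine_time_eq_g_fun_diff: "m \<le> h \<Longrightarrow> spine_time r h m = g_fun h h r - g_fun h m r"
  using sum.atLeastLessThan_concat[of 0 m h "spine_step r h"]
  by (simp add: spine_time_def g_fun_eq_sum_spine_step atLeast0LessThan)

lemma sum_lessThan_if_eq:
  fixes a b :: real
  assumes "c < n" shows "(\<Sum>i<n. if i = c then a else b) = a + (real n - 1) * b"
proof -
  have "(\<Sum>i<n. if i = c then a else b) = (\<Sum>i<n. b + (if i = c then a - b else 0))"
    by (rule sum.cong) auto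
  also have "\<dots> = real n * b + (a - b)" using assms by (simp add: sum.distrib)
  finally show ?thesis by (simp add: algebra_simps)
qed

locale complete_tree_leaf =
  fixes d h :: nat and v :: "nat list"
  assumes d: "1 \<le> d" and h: "1 \<le> h" and v: "v \<in> tree_verts d h" "length v = h"
begin

abbreviation H :: "nat list \<Rightarrow> real" where
  "H \<equiv> tree_hitting_time (real d) h v"

lemma nth_leaf_less: "k < h \<Longrightarrow> v ! k < d"
proof -
  assume "k < h"
  then have "v ! k \<in> set v" using v(2) by simp
  then show ?thesis using v(1) by (auto simp: tree_verts_def)
qed

lemma tree_hitting_time_root:
  "card (tree_nbrs d h []) * H [] = card (tree_nbrs d h []) + (\<Sum>w\<in>tree_nbrs d h []. H w)"
proof -
  let ?r = "real d"
  have N: "tree_nbrs d h [] = (\<lambda>i. [i]) ` {..<d}"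
    using h by (simp add: tree_nbrs_eq tree_verts_def)
  have "H [i] = (if i = v ! 0 then spine_time ?r h 1 else spine_time ?r h 0 + climb_time ?r h 1)" for i
    using tree_hitting_time_prefix[of "[i]" v] tree_hitting_time_snoc_prefix[of "[]" v i]
      prefix_snoc_iff_nth[of "[]" i v] v h by auto
  then have nbrs: "(\<Sum>w\<in>tree_nbrs d h []. H w)
      = spine_time ?r h 1 + (?r - 1) * (spine_time ?r h 0 + climb_time ?r h 1)"
    using nth_leaf_less[of 0] h by (simp add: N sum.reindex inj_on_def sum_lessThan_if_eq)
  have card: "card (tree_nbrs d h []) = d"
    by (simp add: N card_image inj_on_def)
  have root: "H [] = spine_time ?r h 0"
    using tree_hitting_time_prefix[of "[]" v] by simp
  have "0 < h" using h by simp
  show ?thesis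
    unfolding nbrs card root spine_time_rec[OF \<open>0 < h\<close>] spine_step_0[OF \<open>0 < h\<close>] One_nat_def
    by algebra
qed

lemma tree_hitting_time_spine:
  assumes u: "u \<in> tree_verts d h" "u \<noteq> []" "prefix u v" "length u < h"
  shows "card (tree_nbrs d h u) * H u = card (tree_nbrs d h u) + (\<Sum>w\<in>tree_nbrs d h u. H w)"
proof -
  let ?r = "real d"
  obtain k where k: "length u = Suc k" using u(2) by (cases u) auto
  have N: "tree_nbrs d h u = insert (butlast u) ((\<lambda>i. u @ [i]) ` {..<d})"
    using u by (simp add: tree_nbrs_eq)
  have parent_notin: "butlast u \<notin> (\<lambda>i. u @ [i]) ` {..<d}"
    by (auto dest: arg_cong[where f = length])
  have parent: "H (butlast u) = spine_time ?r h k"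
    using u(3) k by (simp add: tree_hitting_time_prefix prefix_order.trans[OF prefixeq_butlast])
  have "H (u @ [i]) = (if i = v ! Suc k then spine_time ?r h (Suc (Suc k))
      else spine_time ?r h (Suc k) + climb_time ?r h (Suc (Suc k)))" for i
    using tree_hitting_time_prefix[of "u @ [i]" v] tree_hitting_time_snoc_prefix[of u v i]
      prefix_snoc_iff_nth[of u i v] u v k by auto
  then have children: "(\<Sum>i<d. H (u @ [i])) = spine_time ?r h (Suc (Suc k))
      + (?r - 1) * (spine_time ?r h (Suc k) + climb_time ?r h (Suc (Suc k)))"
    using nth_leaf_less[of "Suc k"] u k by (simp add: sum_lessThan_if_eq)
  have nbrs: "(\<Sum>w\<in>tree_nbrs d h u. H w) = H (butlast u) + (\<Sum>i<d. H (u @ [i]))"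
    and card: "card (tree_nbrs d h u) = Suc d"
    using parent_notin by (simp_all add: N sum.reindex card_image inj_on_def)
  have self: "H u = spine_time ?r h (Suc k)"
    using u(3) k by (simp add: tree_hitting_time_prefix)
  have "Suc k < h" using u k by simp
  then show ?thesis
    unfolding nbrs card parent children self of_nat_Suc
      spine_time_rec[OF Suc_lessD[OF \<open>Suc k < h\<close>]] spine_time_rec[OF \<open>Suc k < h\<close>]
      spine_step_Suc[OF \<open>Suc k < h\<close>]
    by algebra
qed

lemma tree_hitting_time_off_spine:
  assumes u: "u \<in> tree_verts d h" "\<not> prefix u v"
  shows "card (tree_nbrs d h u) * H u = card (tree_nbrs d h u) + (\<Sum>w\<in>tree_nbrs d h u. H w)"
proof -
  let ?r = "real d" and ?a = "length (longest_common_prefix u v)"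
  let ?c = "spine_time ?r h ?a - ascent_time ?r h ?a"
  have "u \<noteq> []" using u(2) by auto
  then obtain k where k: "length u = Suc k" by (cases u) auto
  have H_common_prefix: "H w = ?c + ascent_time ?r h (length w)"
    if "longest_common_prefix w v = longest_common_prefix u v" for w
    using that by (simp add: tree_hitting_time_def)
  have self: "H u = ?c + ascent_time ?r h k + climb_time ?r h (Suc k)"
    using H_common_prefix[of u] k by (simp add: ascent_time_Suc)
  have parent: "H (butlast u) = ?c + ascent_time ?r h k"
    using H_common_prefix longest_common_prefix_butlast[OF \<open>u \<noteq> []\<close> u(2)] k by simp
  show ?thesis
  proof (cases "length u < h")
    case True
    have N: "tree_nbrs d h u = insert (butlast u) ((\<lambda>i. u @ [i]) ` {..<d})"
      using u True \<open>u \<noteq> []\<close> by (simp add: tree_nbrs_eq)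
    have parent_notin: "butlast u \<notin> (\<lambda>i. u @ [i]) ` {..<d}"
      by (auto dest: arg_cong[where f = length])
    have "H (u @ [i]) = ?c + ascent_time ?r h k + climb_time ?r h (Suc k) + climb_time ?r h (Suc (Suc k))" for i
      using H_common_prefix[of "u @ [i]"] u(2) k
      by (simp add: longest_common_prefix_snoc prefix_snoc_iff_nth ascent_time_Suc)
    then have nbrs: "(\<Sum>w\<in>tree_nbrs d h u. H w) = H (butlast u)
        + ?r * (?c + ascent_time ?r h k + climb_time ?r h (Suc k) + climb_time ?r h (Suc (Suc k)))"
      and card: "card (tree_nbrs d h u) = Suc d"
      using parent_notin by (simp_all add: N sum.reindex card_image inj_on_def)
    have "Suc k < h" using True k by simp
    then show ?thesis
      unfolding nbrs card self parent of_nat_Suc climb_time_rec[OF \<open>Suc k < h\<close>]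
      by algebra
  next
    case False
    then have "length u = h" using u(1) by (simp add: tree_verts_def)
    then have "tree_nbrs d h u = {butlast u}"
      using u(1) \<open>u \<noteq> []\<close> by (simp add: tree_nbrs_eq)
    then show ?thesis
      using self parent climb_time_last[of ?r h] \<open>length u = h\<close> k by simp
  qed
qed

lemma tree_hitting_time_harmonic:
  assumes u: "u \<in> tree_verts d h" "u \<noteq> v"
  shows "H u = 1 + (\<Sum>w\<in>tree_verts d h. srw_trans d h u w * H w)"
proof -
  have "card (tree_nbrs d h u) * H u = card (tree_nbrs d h u) + (\<Sum>w\<in>tree_nbrs d h u. H w)"
  proof (cases "prefix u v")
    case True
    have "length u < h"
      using True u(2) v(2) prefix_length_le[OF True] prefix_length_prefix[of v v u]
      by (metis le_neq_implies_less prefix_order.antisym prefix_order.refl)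
    then show ?thesis
      using True u tree_hitting_time_root tree_hitting_time_spine by blast
  next
    case False
    then show ?thesis using u tree_hitting_time_off_spine by blast
  qed
  moreover have "0 < card (tree_nbrs d h u)"
    using tree_nbrs_nonempty[OF d h u(1)] finite_tree_nbrs by (simp add: card_gt_0_iff)
  ultimately have "H u = 1 + (\<Sum>w\<in>tree_nbrs d h u. H w) / card (tree_nbrs d h u)"
    by (simp add: field_simps)
  then show ?thesis
    by (simp only: sum_srw_trans_mult[OF u(1)])
qed

end

theorem mainTheorem8:
  fixes d h l :: nat and v :: "nat list"
  assumes "d \<ge> 1" and "h \<ge> 1"
    and "v \<in> tree_verts d h" and "length v = h"
    and "l \<le> h"
  shows "summable (\<lambda>n. real n * first_hit_prob d h (take (h - l) v) v n)
     \<and> hitting_time d h (take (h - l) v) v = g_fun h h (real d) - g_fun h (h - l) (real d)"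
proof -
  interpret complete_tree_leaf d h v
    using assms by unfold_locales auto
  interpret first_passage "tree_verts d h" "srw_trans d h" v "\<lambda>n x. first_hit_prob d h x v n" H
  proof
    show "H v = 0"
      using tree_hitting_time_prefix[of v v] spine_time_last assms(4) by simp
  qed (use assms in \<open>auto simp: finite_tree_verts srw_trans_nonneg sum_srw_trans first_hit_prob_0
      first_hit_prob_Suc first_hit_prob_nonneg tree_hitting_time_nonneg tree_hitting_time_harmonic\<close>)
  have "take (h - l) v \<in> tree_verts d h"
    using assms(3) by (auto simp: tree_verts_def dest: in_set_takeD)
  then have "(\<lambda>n. real n * first_hit_prob d h (take (h - l) v) v n) sums H (take (h - l) v)"
    by (rule first_passage_sums)
  moreover have "H (take (h - l) v) = g_fun h h (real d) - g_fun h (h - l) (real d)"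
    using tree_hitting_time_prefix[OF take_is_prefix] spine_time_eq_g_fun_diff assms(4) by simp
  ultimately show ?thesis by (simp add: hitting_time_def sums_iff)
qed

end
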